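(* Let $\rho,\lambda,\mu$ be partitions of $n$, write $|\rho|$ for the number of parts of $\rho$, and let $|\lambda|=I$, $|\mu|=J$. Let $m_\rho=m_\rho^\lambda m_\rho^\mu$. Then: (a) $m_{(n-1,1)}=(I-1)(J-1)$; this is the multiplicity attached to $\beta_{(n-1,1)}=1-2/n$. (b) If $m_\rho>0$, then $|\rho|\le\min(I,J)$ and $\rho_1\ge\max(\lambda_1,\mu_1)$. (c) If $\rho=(n-k,k)$ with $1\le k\le\lfloor n/2\rfloor$ and $\lambda=(n-j,j)$, then $m_\rho^\lambda=0$ if $k>j$ and $m_\rho^\lambda=1$ otherwise. (d) If $\rho=(n-k,k)$, $\mu=(\mu_1,\dots,\mu_J)$ and $\mu_1\ge k$, then \[ m_\rho^\mu=\#\Big\{(x_1,\dots,x_{J-1})\in\mathbb{N}^{J-1}:\ \sum_{j=1}^{J-1}x_j=k,\ x_j\le\mu_{j+1}\Big\}=\big|\mathcal{T}_{(k,\,n-\mu_1-k),(\mu_2,\mu_3,\dots,\mu_J)}\big|. \]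
   Context: For partitions $\rho,\lambda$ of $n$, the Kostka number $m_\rho^\lambda$ is the number of semistandard Young tableaux of shape $\rho$ and content $\lambda$: fillings of the Young diagram of $\rho$ with $\lambda_1$ symbols $1$, $\lambda_2$ symbols $2$, etc., with rows weakly increasing and columns strictly increasing. $\beta_\rho=\frac1n+\frac1{n^2}\sum_{j}\left[\rho_j^2-(2j-1)\rho_j\right]$. For sequences $a=(a_1,\dots,a_p)$, $b=(b_1,\dots,b_q)$ of nonnegative integers with equal sums, $\mathcal{T}_{a,b}$ denotes the set of $p\times q$ nonnegative integer tables with row sums $a$ and column sums $b$. Here $\mathbb{N}=\{0,1,2,\dots\}$. *)

theory Defs
  imports Complex_Main
begin

text \<open>A partition of n: a weakly decreasing list of positive naturals summing to n.
  Part rho_j (1-indexed in the paper) is rho ! (j-1).\<close>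
definition is_partition :: "nat \<Rightarrow> nat list \<Rightarrow> bool" where
  "is_partition n \<rho> \<longleftrightarrow> sorted_wrt (\<ge>) \<rho> \<and> (\<forall>x\<in>set \<rho>. 0 < x) \<and> sum_list \<rho> = n"

definition strip_zeros :: "nat list \<Rightarrow> nat list" where
  "strip_zeros xs = filter (\<lambda>x. 0 < x) xs"

definition cells :: "nat list \<Rightarrow> (nat \<times> nat) set" where
  "cells \<rho> = {(i, j). i < length \<rho> \<and> j < \<rho> ! i}"

definition ssyt :: "nat list \<Rightarrow> nat list \<Rightarrow> (nat \<Rightarrow> nat \<Rightarrow> nat) set" where
  "ssyt \<rho> la = {T. (\<forall>i j. (i, j) \<notin> cells \<rho> \<longrightarrow> T i j = 0)
      \<and> (\<forall>(i, j)\<in>cells \<rho>. 1 \<le> T i j \<and> T i j \<le> length la)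
      \<and> (\<forall>i j. (i, Suc j) \<in> cells \<rho> \<longrightarrow> T i j \<le> T i (Suc j))
      \<and> (\<forall>i j. (Suc i, j) \<in> cells \<rho> \<longrightarrow> T i j < T (Suc i) j)
      \<and> (\<forall>c\<in>{1..length la}. card {(i, j)\<in>cells \<rho>. T i j = c} = la ! (c - 1))}"

definition kostka :: "nat list \<Rightarrow> nat list \<Rightarrow> nat" where
  "kostka \<rho> la = card (ssyt \<rho> la)"

definition beta :: "nat \<Rightarrow> nat list \<Rightarrow> real" where
  "beta n \<rho> = 1 / real n + 1 / (real n)^2 *
     (\<Sum>j<length \<rho>. (real (\<rho> ! j))^2 - (2 * real (j + 1) - 1) * real (\<rho> ! j))"

definition tables :: "nat list \<Rightarrow> nat list \<Rightarrow> (nat \<Rightarrow> nat \<Rightarrow> nat) set" where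
  "tables a b = {M. (\<forall>i j. (length a \<le> i \<or> length b \<le> j) \<longrightarrow> M i j = 0)
      \<and> (\<forall>i<length a. (\<Sum>j<length b. M i j) = a ! i)
      \<and> (\<forall>j<length b. (\<Sum>i<length a. M i j) = b ! j)}"

end

theory Submission
  imports Defs "HOL-Library.Multiset"
begin

text \<open>
  A semistandard tableau of two-row shape \<open>(a, b)\<close> and content \<open>\<mu> = (m, \<mu>\<^sub>2, \<dots>)\<close> is
  determined by the multiset of entries of its second row, since both rows are sorted and
  the first row holds the remaining entries. If \<open>b \<le> a\<close> the second row avoids the symbol 1,
  and if moreover \<open>b \<le> m\<close> every sub-multiset of size \<open>b\<close> of \<open>{2\<^sup>\<mu>\<^sub>2, 3\<^sup>\<mu>\<^sub>3, \<dots>}\<close> occurs: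
  the first row begins with its \<open>m\<close> ones, so the columns increase strictly.
  Recording multiplicities turns these multisets into compositions of \<open>b\<close> bounded by
  \<open>(\<mu>\<^sub>2, \<mu>\<^sub>3, \<dots>)\<close>, which are the first rows of the two-row tables counted in (d).
  Parts (a) and (c) are the cases \<open>b = 1\<close> and \<open>\<mu>\<^sub>2 = j\<close>. For (b), column strictness forces
  every entry in row \<open>i\<close> to exceed \<open>i\<close>, so there are at most as many rows as symbols and
  all ones lie in the first row.
\<close>

section \<open>Bounded compositions and sub-multisets\<close>

fun content_mset :: "nat list \<Rightarrow> nat multiset" where
  "content_mset [] = {#}"
| "content_mset (m # ms) = replicate_mset m 1 + image_mset Suc (content_mset ms)"

lemma count_image_mset_Suc [simp]: "count (image_mset Suc M) (Suc x) = count M x"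
  by (induction M) auto

lemma count_image_mset_Suc_0 [simp]: "count (image_mset Suc M) 0 = 0"
  by (induction M) auto

lemma count_content_mset:
  "count (content_mset \<mu>) c = (if 1 \<le> c \<and> c \<le> length \<mu> then \<mu> ! (c - 1) else 0)"
proof (induction \<mu> arbitrary: c)
  case (Cons m ms)
  then show ?case
    by (cases c) (auto simp: nth_Cons split: nat.split)
qed simp

lemma in_content_msetD: "x \<in># content_mset \<mu> \<Longrightarrow> 1 \<le> x \<and> x \<le> length \<mu>"
  by (metis count_content_mset count_inI not_in_iff)

lemma size_content_mset [simp]: "size (content_mset \<mu>) = sum_list \<mu>"
  by (induction \<mu>) auto

definition bounded_compositions :: "nat list \<Rightarrow> nat \<Rightarrow> nat list set" where
  "bounded_compositions bs k =
     {xs. length xs = length bs \<and> sum_list xs = k \<and> (\<forall>i<length bs. xs ! i \<le> bs ! i)}"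

lemma card_bounded_compositions_eq_card_submultisets:
  "card (bounded_compositions bs k) = card {N. N \<subseteq># content_mset bs \<and> size N = k}"
proof -
  let ?L = "length bs"
  define to_mset where "to_mset xs = (\<Sum>i<?L. replicate_mset (xs ! i) (Suc i))" for xs
  define to_list where "to_list N = map (\<lambda>i. count N (Suc i)) [0..<?L]" for N
  have count_to_mset: "count (to_mset xs) c = (if 1 \<le> c \<and> c \<le> ?L then xs ! (c - 1) else 0)"
    for xs c
    unfolding to_mset_def count_sum by (cases c) auto
  have size_to_mset: "size (to_mset xs) = sum_list xs" if "length xs = ?L" for xs
    using that by (simp add: to_mset_def sum_list_sum_nth atLeast0LessThan)
  have count_le: "count N (Suc i) \<le> bs ! i" if "N \<subseteq># content_mset bs" "i < ?L" for N i
    using mset_subset_eq_count[OF that(1), of "Suc i"] that(2) by (simp add: count_content_mset)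
  have count_outside: "count N c = 0" if "N \<subseteq># content_mset bs" "c = 0 \<or> ?L < c" for N c
    using mset_subset_eq_count[OF that(1), of c] that(2) by (auto simp: count_content_mset)
  have to_mset_to_list: "to_mset (to_list N) = N" if "N \<subseteq># content_mset bs" for N
  proof (rule multiset_eqI)
    fix c
    show "count (to_mset (to_list N)) c = count N c"
      using count_outside[OF that, of c] by (cases c) (auto simp: count_to_mset to_list_def)
  qed
  have "bij_betw to_mset (bounded_compositions bs k) {N. N \<subseteq># content_mset bs \<and> size N = k}"
  proof (rule bij_betw_byWitness[where f' = to_list])
    show "\<forall>xs\<in>bounded_compositions bs k. to_list (to_mset xs) = xs"
      by (auto simp: bounded_compositions_def to_list_def count_to_mset intro!: nth_equalityI)
    show "\<forall>N\<in>{N. N \<subseteq># content_mset bs \<and> size N = k}. to_mset (to_list N) = N"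
      using to_mset_to_list by blast
    show "to_mset ` bounded_compositions bs k \<subseteq> {N. N \<subseteq># content_mset bs \<and> size N = k}"
      by (auto simp: bounded_compositions_def subseteq_mset_def count_to_mset count_content_mset
          size_to_mset)
    show "to_list ` {N. N \<subseteq># content_mset bs \<and> size N = k} \<subseteq> bounded_compositions bs k"
    proof safe
      fix N assume N: "N \<subseteq># content_mset bs" "k = size N"
      have "sum_list (to_list N) = size (to_mset (to_list N))"
        by (simp add: size_to_mset to_list_def)
      then have "sum_list (to_list N) = size N"
        by (simp only: to_mset_to_list[OF N(1)])
      then show "to_list N \<in> bounded_compositions bs (size N)"
        using count_le[OF N(1)] by (auto simp: bounded_compositions_def to_list_def)
    qed
  qed
  then show ?thesis by (rule bij_betw_same_card)
qed

lemma card_submultisets_image_mset: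
  assumes "inj f"
  shows "card {M. M \<subseteq># image_mset f C \<and> size M = k} = card {N. N \<subseteq># C \<and> size N = k}"
proof -
  have inv_cancel: "image_mset (inv f) (image_mset f N) = N" for N
    using assms by (simp add: multiset.map_comp)
  have "{M. M \<subseteq># image_mset f C \<and> size M = k} = image_mset f ` {N. N \<subseteq># C \<and> size N = k}"
  proof (intro equalityI subsetI)
    fix M assume M: "M \<in> {M. M \<subseteq># image_mset f C \<and> size M = k}"
    then have "\<forall>x\<in>#M. f (inv f x) = x"
      by (auto dest!: mset_subset_eqD simp: f_inv_into_f)
    then have "M = image_mset f (image_mset (inv f) M)"
      by (simp add: multiset.map_comp multiset.map_ident_strong)
    moreover have "image_mset (inv f) M \<subseteq># C"
      using image_mset_subseteq_mono[of M "image_mset f C" "inv f"] M by (simp add: inv_cancel)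
    ultimately show "M \<in> image_mset f ` {N. N \<subseteq># C \<and> size N = k}"
      using M by (metis (mono_tags, lifting) image_eqI mem_Collect_eq size_image_mset)
  qed (auto intro: image_mset_subseteq_mono)
  moreover have "inj_on (image_mset f) {N. N \<subseteq># C \<and> size N = k}"
    by (metis inj_onI inv_cancel)
  ultimately show ?thesis
    by (simp add: card_image)
qed

lemma card_bounded_compositions_one:
  assumes "\<forall>b\<in>set bs. 0 < b"
  shows "card (bounded_compositions bs 1) = length bs"
proof -
  have "set_mset (content_mset bs) = {1..length bs}"
    using assms by (auto simp: set_mset_def count_content_mset)
  moreover have "{N. N \<subseteq># C \<and> size N = 1} = (\<lambda>x. {#x#}) ` set_mset C" for C :: "nat multiset"
  proof (intro equalityI subsetI)
    fix N assume N: "N \<in> {N. N \<subseteq># C \<and> size N = 1}"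
    then obtain x where "N = {#x#}"
      using size_1_singleton_mset by auto
    then show "N \<in> (\<lambda>x. {#x#}) ` set_mset C"
      using N by auto
  qed auto
  ultimately show ?thesis
    by (simp add: card_bounded_compositions_eq_card_submultisets card_image inj_on_def)
qed

lemma bounded_compositions_Nil: "bounded_compositions [] k = (if k = 0 then {[]} else {})"
  by (auto simp: bounded_compositions_def)

lemma bounded_compositions_singleton:
  "bounded_compositions [j] k = (if k \<le> j then {[k]} else {})"
  by (auto simp: bounded_compositions_def length_Suc_conv)

lemma card_bounded_compositions_eq_card_tables:
  "card (bounded_compositions bs k) = card (tables [k, sum_list bs - k] bs)"
proof -
  let ?L = "length bs"
  define to_table where "to_table xs i j =
      (if i = 0 \<and> j < ?L then xs ! j else if i = 1 \<and> j < ?L then bs ! j - xs ! j else 0)"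
    for xs and i j :: nat
  define first_row where "first_row M = map (M 0) [0..<?L]" for M :: "nat \<Rightarrow> nat \<Rightarrow> nat"
  have sum_bs: "(\<Sum>j<?L. bs ! j) = sum_list bs"
    by (simp add: sum_list_sum_nth atLeast0LessThan)
  have table_iff: "M \<in> tables [k, sum_list bs - k] bs \<longleftrightarrow>
      (\<forall>i j. (2 \<le> i \<or> ?L \<le> j) \<longrightarrow> M i j = 0)
    \<and> (\<Sum>j<?L. M 0 j) = k \<and> (\<Sum>j<?L. M 1 j) = sum_list bs - k
    \<and> (\<forall>j<?L. M 0 j + M 1 j = bs ! j)" for M
    unfolding tables_def by (auto simp: less_Suc_eq numeral_2_eq_2)
  have "bij_betw to_table (bounded_compositions bs k) (tables [k, sum_list bs - k] bs)"
  proof (rule bij_betw_byWitness[where f' = first_row])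
    show "\<forall>xs\<in>bounded_compositions bs k. first_row (to_table xs) = xs"
      by (auto simp: bounded_compositions_def first_row_def to_table_def intro!: nth_equalityI)
    show "\<forall>M\<in>tables [k, sum_list bs - k] bs. to_table (first_row M) = M"
    proof (intro ballI ext)
      fix M i j assume "M \<in> tables [k, sum_list bs - k] bs"
      then show "to_table (first_row M) i j = M i j"
        unfolding table_iff to_table_def first_row_def
        by (cases "i = 0 \<or> i = 1") (auto simp: add.commute[of "M 0 j"])
    qed
    show "to_table ` bounded_compositions bs k \<subseteq> tables [k, sum_list bs - k] bs"
    proof (intro image_subsetI)
      fix xs assume xs: "xs \<in> bounded_compositions bs k"
      then have "(\<Sum>j<?L. xs ! j) = k"
        unfolding bounded_compositions_def by (auto simp: sum_list_sum_nth atLeast0LessThan)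
      moreover have "(\<Sum>j<?L. bs ! j - xs ! j) = sum_list bs - k"
        using xs \<open>(\<Sum>j<?L. xs ! j) = k\<close>
        by (subst sum_subtractf_nat) (auto simp: bounded_compositions_def sum_bs)
      ultimately show "to_table xs \<in> tables [k, sum_list bs - k] bs"
        using xs unfolding table_iff by (auto simp: to_table_def bounded_compositions_def)
    qed
    show "first_row ` tables [k, sum_list bs - k] bs \<subseteq> bounded_compositions bs k"
    proof (intro image_subsetI)
      fix M assume "M \<in> tables [k, sum_list bs - k] bs"
      then have "(\<Sum>j<?L. M 0 j) = k" and "\<forall>j<?L. M 0 j \<le> bs ! j"
        unfolding table_iff by (metis le_add1)+
      then show "first_row M \<in> bounded_compositions bs k"
        by (simp add: first_row_def bounded_compositions_def sum_list_sum_nth atLeast0LessThan)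
    qed
  qed
  then show ?thesis
    by (rule bij_betw_same_card)
qed

section \<open>Two-row tableaux\<close>

abbreviation row :: "(nat \<Rightarrow> nat \<Rightarrow> nat) \<Rightarrow> nat \<Rightarrow> nat \<Rightarrow> nat list" where
  "row T i len \<equiv> map (T i) [0..<len]"

lemma cells_two_rows: "(i, j) \<in> cells [a, b] \<longleftrightarrow> i = 0 \<and> j < a \<or> i = 1 \<and> j < b"
  by (auto simp: cells_def less_Suc_eq nth_Cons split: nat.splits)

lemma count_mset_row: "count (mset (row T i len)) c = card {j. j < len \<and> T i j = c}"
  unfolding count_mset count_list_eq_length_filter length_filter_conv_card
  by (auto intro!: arg_cong[where f = card])

lemma card_two_row_cells_with_entry:
  "card {(i, j) \<in> cells [a, b]. T i j = c} = count (mset (row T 0 a)) c + count (mset (row T 1 b)) c"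
proof -
  have cells_eq: "{(i, j) \<in> cells [a, b]. T i j = c}
      = Pair 0 ` {j. j < a \<and> T 0 j = c} \<union> Pair 1 ` {j. j < b \<and> T 1 j = c}"
    by (auto simp: cells_two_rows)
  show ?thesis
    unfolding count_mset_row cells_eq by (subst card_Un_disjoint) (auto simp: card_image inj_on_def)
qed

lemma ssyt_two_rows_iff:
  "T \<in> ssyt [a, b] \<mu> \<longleftrightarrow>
     (\<forall>i j. \<not> (i = 0 \<and> j < a \<or> i = 1 \<and> j < b) \<longrightarrow> T i j = 0)
   \<and> sorted (row T 0 a) \<and> sorted (row T 1 b) \<and> (\<forall>j<b. T 0 j < T 1 j)
   \<and> mset (row T 0 a) + mset (row T 1 b) = content_mset \<mu>"
proof -
  let ?J = "length \<mu>" and ?R = "mset (row T 0 a) + mset (row T 1 b)"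
  have content_iff:
    "(\<forall>(i, j)\<in>cells [a, b]. 1 \<le> T i j \<and> T i j \<le> ?J)
       \<and> (\<forall>c\<in>{1..?J}. count ?R c = \<mu> ! (c - 1))
     \<longleftrightarrow> ?R = content_mset \<mu>"
  proof
    assume entries: "(\<forall>(i, j)\<in>cells [a, b]. 1 \<le> T i j \<and> T i j \<le> ?J)
       \<and> (\<forall>c\<in>{1..?J}. count ?R c = \<mu> ! (c - 1))"
    show "?R = content_mset \<mu>"
    proof (rule multiset_eqI)
      fix c
      show "count ?R c = count (content_mset \<mu>) c"
      proof (cases "c \<in> {1..?J}")
        case False
        then have "c \<notin># ?R"
          using entries by (auto simp: cells_two_rows)
        then show ?thesis
          using False by (metis atLeastAtMost_iff count_content_mset not_in_iff)
      qed (use entries in \<open>simp add: count_content_mset\<close>)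
    qed
  next
    assume R: "?R = content_mset \<mu>"
    then have "set (row T 0 a) \<union> set (row T 1 b) = set_mset (content_mset \<mu>)"
      by (metis set_mset_mset set_mset_union)
    then have "T i j \<in># content_mset \<mu>" if "(i, j) \<in> cells [a, b]" for i j
      using that by (auto simp: cells_two_rows)
    then show "(\<forall>(i, j)\<in>cells [a, b]. 1 \<le> T i j \<and> T i j \<le> ?J)
       \<and> (\<forall>c\<in>{1..?J}. count ?R c = \<mu> ! (c - 1))"
      using R in_content_msetD by (simp add: count_content_mset) blast
  qed
  show ?thesis
    unfolding ssyt_def card_two_row_cells_with_entry count_union[symmetric]
    unfolding content_iff[symmetric]
    by (auto simp: cells_two_rows sorted_iff_nth_Suc)
qed

lemma sorted_eq_if_mset_eq: "sorted xs \<Longrightarrow> sorted ys \<Longrightarrow> mset xs = mset ys \<Longrightarrow> xs = ys"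
  by (metis properties_for_sort sorted_sort_id)

lemma ssyt_two_rows_eqI:
  assumes T: "T \<in> ssyt [a, b] \<mu>" and T': "T' \<in> ssyt [a, b] \<mu>"
    and second_row: "mset (row T 1 b) = mset (row T' 1 b)"
  shows "T = T'"
proof -
  note T_iff = T[unfolded ssyt_two_rows_iff] and T'_iff = T'[unfolded ssyt_two_rows_iff]
  have row1: "row T 1 b = row T' 1 b"
    using T_iff T'_iff second_row by (blast intro: sorted_eq_if_mset_eq)
  have "mset (row T 0 a) = mset (row T' 0 a)"
    using T_iff T'_iff second_row row1 by (metis add_right_cancel)
  then have row0: "row T 0 a = row T' 0 a"
    using T_iff T'_iff by (blast intro: sorted_eq_if_mset_eq)
  show "T = T'"
  proof (intro ext)
    fix i j
    show "T i j = T' i j"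
    proof (cases "i = 0 \<and> j < a \<or> i = 1 \<and> j < b")
      case True
      then show ?thesis
        using row0 row1 by (auto simp: map_eq_conv)
    next
      case False
      then show ?thesis
        using T_iff T'_iff by simp
    qed
  qed
qed

lemma second_row_subseteq_shifted_content:
  assumes T: "T \<in> ssyt [a, b] (m # ms)" and "b \<le> a"
  shows "mset (row T 1 b) \<subseteq># image_mset Suc (content_mset ms)"
proof -
  have rows: "mset (row T 0 a) + mset (row T 1 b) = replicate_mset m 1 + image_mset Suc (content_mset ms)"
    using T by (simp only: ssyt_two_rows_iff content_mset.simps)
  have "1 \<le> T 0 j" if "j < a" for j
    using T that unfolding ssyt_def by (auto simp: cells_two_rows)
  moreover have "T 0 j < T 1 j" if "j < b" for j
    using T that unfolding ssyt_def by (auto simp: cells_two_rows)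
  ultimately have "T 1 j \<noteq> 1" if "j < b" for j
    using that \<open>b \<le> a\<close> by (metis leD less_le_trans not_less_iff_gr_or_eq)
  then have "1 \<notin> set (row T 1 b)"
    by (metis (mono_tags) atLeastLessThan_iff imageE set_map set_upt)
  show ?thesis
  proof (rule mset_subset_eqI)
    fix x
    show "count (mset (row T 1 b)) x \<le> count (image_mset Suc (content_mset ms)) x"
    proof (cases "x = 1")
      case True
      have "count (mset (row T 1 b)) 1 = 0"
        using \<open>1 \<notin> set (row T 1 b)\<close> by (rule iffD2[OF count_mset_0_iff])
      then show ?thesis
        using True by simp
    next
      case False
      have "count (mset (row T 1 b)) x
          \<le> count (replicate_mset m 1 + image_mset Suc (content_mset ms)) x"
        by (metis rows count_union le_add2)
      then show ?thesis
        using False by simp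
    qed
  qed
qed

lemma ssyt_two_rows_with_second_row:
  assumes M: "M \<subseteq># image_mset Suc (content_mset ms)" and size_M: "size M = b" and "b \<le> m"
    and sizes: "a + b = m + sum_list ms"
  shows "\<exists>T \<in> ssyt [a, b] (m # ms). mset (row T 1 b) = M"
proof -
  let ?C = "image_mset Suc (content_mset ms)"
  define L0 where "L0 = replicate m 1 @ sorted_list_of_multiset (?C - M)"
  define L1 where "L1 = sorted_list_of_multiset M"
  define T where "T i j = (if i = 0 \<and> j < a then L0 ! j else if i = 1 \<and> j < b then L1 ! j else 0)"
    for i j :: nat
  have entries_ge_2: "2 \<le> x" if "x \<in># ?C" for x
    using that in_content_msetD by fastforce
  have "b \<le> sum_list ms"
    using size_mset_mono[OF M] size_M by simp
  then have len0: "length L0 = a"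
    using sizes by (simp add: L0_def size_Diff_submset[OF M] size_M flip: size_mset)
  have len1: "length L1 = b"
    using size_M by (simp add: L1_def flip: size_mset)
  have row0: "row T 0 a = L0"
    by (rule nth_equalityI) (simp_all add: T_def len0)
  have row1: "row T 1 b = L1"
    by (rule nth_equalityI) (simp_all add: T_def len1)
  have "sorted L0"
    unfolding L0_def sorted_append
    using entries_ge_2 by (auto dest: in_diffD)
  moreover have "sorted L1"
    by (simp add: L1_def)
  moreover have "T 0 j < T 1 j" if "j < b" for j
  proof -
    have "T 0 j = 1"
      using that \<open>b \<le> m\<close> len0 sizes by (simp add: T_def L0_def nth_append)
    moreover have "L1 ! j \<in># M"
      using that len1 by (metis L1_def nth_mem set_sorted_list_of_multiset)
    then have "2 \<le> T 1 j"
      using that entries_ge_2 mset_subset_eqD[OF M] by (simp add: T_def)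
    ultimately show ?thesis
      by simp
  qed
  moreover have "mset L0 + mset L1 = replicate_mset m 1 + ((?C - M) + M)"
    by (simp only: L0_def L1_def mset_append mset_replicate mset_sorted_list_of_multiset add.assoc)
  then have "mset L0 + mset L1 = content_mset (m # ms)"
    by (simp only: subset_mset.diff_add[OF M] content_mset.simps)
  ultimately have "T \<in> ssyt [a, b] (m # ms)"
    unfolding ssyt_two_rows_iff row0 row1 by (auto simp: T_def)
  then show ?thesis
    using row1 unfolding L1_def by (metis mset_sorted_list_of_multiset)
qed

theorem kostka_two_rows:
  assumes "b \<le> a" and "b \<le> m" and "a + b = m + sum_list ms"
  shows "kostka [a, b] (m # ms) = card (bounded_compositions ms b)"
proof -
  have "bij_betw (\<lambda>T. mset (row T 1 b)) (ssyt [a, b] (m # ms))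
      {M. M \<subseteq># image_mset Suc (content_mset ms) \<and> size M = b}"
    unfolding bij_betw_def
  proof (intro conjI inj_onI equalityI subsetI)
    show "T = T'" if "T \<in> ssyt [a, b] (m # ms)" "T' \<in> ssyt [a, b] (m # ms)"
      and "mset (row T 1 b) = mset (row T' 1 b)" for T T'
      using that by (rule ssyt_two_rows_eqI)
    show "M \<in> {M. M \<subseteq># image_mset Suc (content_mset ms) \<and> size M = b}"
      if "M \<in> (\<lambda>T. mset (row T 1 b)) ` ssyt [a, b] (m # ms)" for M
      using that second_row_subseteq_shifted_content[OF _ \<open>b \<le> a\<close>] by auto
    show "M \<in> (\<lambda>T. mset (row T 1 b)) ` ssyt [a, b] (m # ms)"
      if "M \<in> {M. M \<subseteq># image_mset Suc (content_mset ms) \<and> size M = b}" for M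
      using that ssyt_two_rows_with_second_row[of M ms b m a] assms by auto
  qed
  then show ?thesis
    unfolding kostka_def
    by (simp add: bij_betw_same_card card_submultisets_image_mset
        card_bounded_compositions_eq_card_submultisets)
qed

section \<open>Consequences for partitions\<close>

lemma ssyt_row_less_entry:
  assumes sorted: "sorted_wrt (\<ge>) \<rho>" and T: "T \<in> ssyt \<rho> la"
  shows "(i, j) \<in> cells \<rho> \<Longrightarrow> i < T i j"
proof (induction i)
  case 0
  then show ?case
    using T unfolding ssyt_def by fastforce
next
  case (Suc i)
  then have "Suc i < length \<rho>" "j < \<rho> ! Suc i"
    by (auto simp: cells_def)
  moreover have "\<rho> ! Suc i \<le> \<rho> ! i"
    using sorted_wrt_nth_less[OF sorted, of i "Suc i"] \<open>Suc i < length \<rho>\<close> by simp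
  ultimately have "(i, j) \<in> cells \<rho>"
    by (auto simp: cells_def)
  moreover have "T i j < T (Suc i) j"
    using T Suc.prems unfolding ssyt_def by blast
  ultimately show ?case
    using Suc.IH by simp
qed

lemma ssyt_length_le:
  assumes "sorted_wrt (\<ge>) \<rho>" and "\<forall>x\<in>set \<rho>. 0 < x" and T: "T \<in> ssyt \<rho> la"
  shows "length \<rho> \<le> length la"
proof (cases "\<rho> = []")
  case False
  let ?i = "length \<rho> - 1"
  have "(?i, 0) \<in> cells \<rho>"
    using False assms(2) by (simp add: cells_def)
  then have "?i < T ?i 0" and "T ?i 0 \<le> length la"
    using ssyt_row_less_entry[OF assms(1) T] T unfolding ssyt_def by blast+
  then show ?thesis
    by linarith
qed simp

lemma ssyt_first_content_le:
  assumes "sorted_wrt (\<ge>) \<rho>" and "la \<noteq> []" and T: "T \<in> ssyt \<rho> la"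
  shows "la ! 0 \<le> \<rho> ! 0"
proof -
  have "la ! 0 = card {(i, j) \<in> cells \<rho>. T i j = 1}"
    using T \<open>la \<noteq> []\<close> unfolding ssyt_def by (auto simp: Suc_le_eq)
  also have "\<dots> \<le> card (Pair (0::nat) ` {..<\<rho> ! 0})"
  proof (rule card_mono)
    show "{(i, j) \<in> cells \<rho>. T i j = 1} \<subseteq> Pair 0 ` {..<\<rho> ! 0}"
      using ssyt_row_less_entry[OF assms(1) T] by (force simp: cells_def)
  qed simp
  also have "\<dots> \<le> \<rho> ! 0"
    using card_image_le[of "{..<\<rho> ! 0}" "Pair (0::nat)"] by simp
  finally show ?thesis .
qed

lemma kostka_strip_zeros_two_rows:
  assumes "b \<le> a"
  shows "kostka (strip_zeros [a, b]) \<mu> = kostka [a, b] \<mu>"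
proof -
  have "cells (strip_zeros [a, b]) = cells [a, b]"
    using assms by (auto simp: strip_zeros_def cells_def less_Suc_eq nth_Cons split: nat.splits)
  then show ?thesis
    unfolding kostka_def ssyt_def by simp
qed

lemma beta_n_minus_one_one:
  assumes "2 \<le> n"
  shows "beta n [n - 1, 1] = 1 - 2 / real n"
proof -
  have "real (n - 1) = real n - 1"
    using assms by (simp add: of_nat_diff)
  then have "beta n [n - 1, 1] = 1 / real n + 1 / (real n)^2 * ((real n - 1)^2 - (real n - 1) - 2)"
    unfolding beta_def by (simp add: numeral_2_eq_2)
  also have "\<dots> = 1 - 2 / real n"
    using assms by (simp add: field_simps power2_eq_square)
  finally show ?thesis .
qed

lemma partition_ConsE:
  assumes "is_partition n \<mu>" and "0 < n"
  obtains m ms where "\<mu> = m # ms" "0 < m" "\<forall>x\<in>set ms. 0 < x" "m + sum_list ms = n"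
  using assms by (cases \<mu>) (auto simp: is_partition_def)

lemma sum_list_tl_partition:
  assumes "is_partition n \<mu>" and "0 < n"
  shows "sum_list (tl \<mu>) = n - \<mu> ! 0"
  using assms by (cases \<mu>) (auto simp: is_partition_def)

lemma kostka_pos_imp_shape_bounds:
  assumes "is_partition n \<rho>" and "is_partition n la" and "0 < n" and "0 < kostka \<rho> la"
  shows "length \<rho> \<le> length la \<and> la ! 0 \<le> \<rho> ! 0"
proof -
  obtain T where T: "T \<in> ssyt \<rho> la"
    using assms(4) unfolding kostka_def by (metis card.empty ex_in_conv less_irrefl)
  have "la \<noteq> []"
    using assms(2,3) by (auto simp: is_partition_def)
  then show ?thesis
    using assms(1) ssyt_length_le[OF _ _ T] ssyt_first_content_le[OF _ _ T]
    by (simp add: is_partition_def)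
qed

lemma kostka_n_minus_one_one:
  assumes "is_partition n \<mu>" and "2 \<le> n"
  shows "kostka [n - 1, 1] \<mu> = length \<mu> - 1"
proof -
  obtain m ms where \<mu>: "\<mu> = m # ms" "0 < m" "\<forall>x\<in>set ms. 0 < x" "m + sum_list ms = n"
    using partition_ConsE assms by (metis not_numeral_le_zero not_gr_zero)
  have "kostka [n - 1, 1] (m # ms) = card (bounded_compositions ms 1)"
    using \<mu> assms(2) by (intro kostka_two_rows) auto
  then show ?thesis
    using \<mu> card_bounded_compositions_one[of ms] by simp
qed

lemma kostka_two_rows_of_two_rows:
  assumes "1 \<le> k" and "k \<le> n div 2" and "j \<le> n - j"
  shows "kostka [n - k, k] (strip_zeros [n - j, j]) = (if k > j then 0 else 1)"
proof -
  have "strip_zeros [n - j, j] = (n - j) # strip_zeros [j]"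
    using assms by (auto simp: strip_zeros_def)
  moreover have "kostka [n - k, k] ((n - j) # strip_zeros [j]) = card (bounded_compositions (strip_zeros [j]) k)"
    using assms by (intro kostka_two_rows) (auto simp: strip_zeros_def)
  ultimately show ?thesis
    using assms by (auto simp: strip_zeros_def bounded_compositions_Nil bounded_compositions_singleton)
qed

lemma kostka_strip_zeros_two_rows_partition:
  assumes "is_partition n \<mu>" and "0 < n" and "k \<le> n - k" and "k \<le> \<mu> ! 0"
  shows "kostka (strip_zeros [n - k, k]) \<mu> = card (bounded_compositions (tl \<mu>) k)"
proof -
  obtain m ms where "\<mu> = m # ms" "m + sum_list ms = n"
    using partition_ConsE assms(1,2) by metis
  then show ?thesis
    using assms(3,4) by (simp add: kostka_strip_zeros_two_rows kostka_two_rows)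
qed

lemma bounded_compositions_tl:
  "{xs. length xs = length \<mu> - 1 \<and> sum_list xs = k \<and> (\<forall>j < length \<mu> - 1. xs ! j \<le> \<mu> ! (j + 1))}
     = bounded_compositions (tl \<mu>) k"
  by (auto simp: bounded_compositions_def nth_tl)

theorem corollary3p1:
  fixes n :: nat and \<rho> la \<mu> :: "nat list"
  assumes n_pos: "0 < n"
    and part_rho: "is_partition n \<rho>"
    and part_lam: "is_partition n la"
    and part_mu: "is_partition n \<mu>"
  shows
    "(2 \<le> n \<longrightarrow>
        kostka [n - 1, 1] la * kostka [n - 1, 1] \<mu> = (length la - 1) * (length \<mu> - 1)
      \<and> beta n [n - 1, 1] = 1 - 2 / real n)
   \<and> (kostka \<rho> la * kostka \<rho> \<mu> > 0 \<longrightarrow>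
        length \<rho> \<le> min (length la) (length \<mu>) \<and> \<rho> ! 0 \<ge> max (la ! 0) (\<mu> ! 0))
   \<and> (\<forall>k j. 1 \<le> k \<and> k \<le> n div 2 \<and> j \<le> n - j \<and> la = strip_zeros [n - j, j] \<longrightarrow>
        kostka [n - k, k] la = (if k > j then 0 else 1))
   \<and> (\<forall>k. k \<le> n - k \<and> k \<le> \<mu> ! 0 \<longrightarrow>
        kostka (strip_zeros [n - k, k]) \<mu>
          = card {xs :: nat list. length xs = length \<mu> - 1 \<and> sum_list xs = k
                    \<and> (\<forall>j < length \<mu> - 1. xs ! j \<le> \<mu> ! (j + 1))}
      \<and> card {xs :: nat list. length xs = length \<mu> - 1 \<and> sum_list xs = k
                    \<and> (\<forall>j < length \<mu> - 1. xs ! j \<le> \<mu> ! (j + 1))}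
          = card (tables [k, n - \<mu> ! 0 - k] (tl \<mu>)))"
proof (intro conjI impI allI)
  assume n2: "2 \<le> n"
  show "kostka [n - 1, 1] la * kostka [n - 1, 1] \<mu> = (length la - 1) * (length \<mu> - 1)"
    using kostka_n_minus_one_one[OF part_lam n2] kostka_n_minus_one_one[OF part_mu n2] by simp
  show "beta n [n - 1, 1] = 1 - 2 / real n"
    using beta_n_minus_one_one[OF n2] .
next
  assume "kostka \<rho> la * kostka \<rho> \<mu> > 0"
  then show "length \<rho> \<le> min (length la) (length \<mu>)" and "\<rho> ! 0 \<ge> max (la ! 0) (\<mu> ! 0)"
    using kostka_pos_imp_shape_bounds[OF part_rho _ n_pos] part_lam part_mu by auto
next
  fix k j
  assume "1 \<le> k \<and> k \<le> n div 2 \<and> j \<le> n - j \<and> la = strip_zeros [n - j, j]"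
  then show "kostka [n - k, k] la = (if k > j then 0 else 1)"
    using kostka_two_rows_of_two_rows by blast
next
  fix k
  assume "k \<le> n - k \<and> k \<le> \<mu> ! 0"
  then show "kostka (strip_zeros [n - k, k]) \<mu> = card {xs. length xs = length \<mu> - 1 \<and> sum_list xs = k
      \<and> (\<forall>j < length \<mu> - 1. xs ! j \<le> \<mu> ! (j + 1))}"
    unfolding bounded_compositions_tl using kostka_strip_zeros_two_rows_partition[OF part_mu n_pos]
    by blast
  show "card {xs. length xs = length \<mu> - 1 \<and> sum_list xs = k
      \<and> (\<forall>j < length \<mu> - 1. xs ! j \<le> \<mu> ! (j + 1))} = card (tables [k, n - \<mu> ! 0 - k] (tl \<mu>))"
    unfolding bounded_compositions_tl card_bounded_compositions_eq_card_tables
    by (simp only: sum_list_tl_partition[OF part_mu n_pos])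
qed

end
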